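(* Let $T$ be a tree on $n$ vertices and let $u$ be a vertex of maximum degree in $T$. Suppose $u_1,u_2$ are two distinct neighbours of $u$ such that $u_1$ has exactly $d_1$ neighbours other than $u$, all of them pendant vertices, and $u_2$ has exactly $d_2$ neighbours other than $u$, all of them pendant vertices (so $T$ consists of a subtree $T_1$ containing $u$, together with the paths $u u_1$, $uu_2$ and the pendant vertices attached to $u_1$ and $u_2$). Let $w$ be a pendant neighbour of $u_2$ and let $T'=T-u_2w+u_1w$. If $d_1\geq d_2\geq 1$, then $e^{M_2}(T)<e^{M_2}(T')$.
   Context: For a tree $G$ with edge set $E(G)$ and vertex degrees $d_G(v)$, the exponential of the second Zagreb index is $e^{M_2}(G)=\sum_{uv\in E(G)} e^{d_G(u)d_G(v)}$. A pendant vertex is a vertex of degree 1. *)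

theory Defs
  imports Complex_Main
begin

definition simple_graph :: "'a set \<Rightarrow> 'a set set \<Rightarrow> bool" where
  "simple_graph V E \<longleftrightarrow> finite V \<and> (\<forall>e\<in>E. e \<subseteq> V \<and> card e = 2)"

definition adj :: "'a set set \<Rightarrow> 'a \<Rightarrow> 'a \<Rightarrow> bool" where
  "adj E x y \<longleftrightarrow> {x, y} \<in> E"

definition neighbours :: "'a set set \<Rightarrow> 'a \<Rightarrow> 'a set" where
  "neighbours E v = {x. adj E v x}"

definition degree :: "'a set set \<Rightarrow> 'a \<Rightarrow> nat" where
  "degree E v = card {e\<in>E. v \<in> e}"

definition pendant :: "'a set set \<Rightarrow> 'a \<Rightarrow> bool" where
  "pendant E v \<longleftrightarrow> degree E v = 1"

definition is_path :: "'a set \<Rightarrow> 'a set set \<Rightarrow> 'a list \<Rightarrow> bool" where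
  "is_path V E p \<longleftrightarrow> p \<noteq> [] \<and> set p \<subseteq> V \<and> distinct p \<and>
     (\<forall>i. Suc i < length p \<longrightarrow> adj E (p ! i) (p ! Suc i))"

definition connected_graph :: "'a set \<Rightarrow> 'a set set \<Rightarrow> bool" where
  "connected_graph V E \<longleftrightarrow>
     (\<forall>x\<in>V. \<forall>y\<in>V. \<exists>p. is_path V E p \<and> hd p = x \<and> last p = y)"

definition has_cycle :: "'a set \<Rightarrow> 'a set set \<Rightarrow> bool" where
  "has_cycle V E \<longleftrightarrow> (\<exists>p. is_path V E p \<and> length p \<ge> 3 \<and> adj E (last p) (hd p))"

definition is_tree :: "'a set \<Rightarrow> 'a set set \<Rightarrow> bool" where
  "is_tree V E \<longleftrightarrow> simple_graph V E \<and> V \<noteq> {} \<and> connected_graph V E \<and> \<not> has_cycle V E"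

definition exp_M2 :: "'a set set \<Rightarrow> real" where
  "exp_M2 E = (\<Sum>e\<in>E. exp (real (\<Prod>v\<in>e. degree E v)))"

end

theory Submission
  imports Defs
begin

text \<open>Moving the leaf w from u2 to u1 changes only the weights of the edges at u1 and u2.
  If every neighbour of a vertex v except u is pendant, the edges at v contribute
  e^(kD) + (k - 1) e^k, where k = d(v) and D = d(u). The move turns the degrees
  (k1, k2) = (d1 + 1, d2 + 1) into (k1 + 1, k2 - 1), and because k1 > k2 - 1 the gain
  at u1 exceeds the loss at u2; this only needs e^D \<ge> 2 and e \<ge> 2.\<close>

definition edge_exp_weight :: "'a set set \<Rightarrow> 'a set \<Rightarrow> real" where
  "edge_exp_weight G e = exp (real (\<Prod>v\<in>e. degree G v))"

lemma card_2_memberE: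
  assumes "card e = 2" "v \<in> e"
  obtains x where "x \<noteq> v" "e = {v, x}"
  using assms unfolding card_2_iff by (metis insert_commute insertE singletonD)

lemma card_2_eq_doubleton: "card e = 2 \<Longrightarrow> a \<in> e \<Longrightarrow> b \<in> e \<Longrightarrow> a \<noteq> b \<Longrightarrow> e = {a, b}"
  by (metis card_2_memberE insertE singletonD)

lemma two_elem_edge_neq: "\<forall>e\<in>G. card e = 2 \<Longrightarrow> {x, y} \<in> G \<Longrightarrow> x \<noteq> y"
  by force

lemma exp_M2_eq_sum_edge_exp_weight: "exp_M2 G = (\<Sum>e\<in>G. edge_exp_weight G e)"
  by (simp add: exp_M2_def edge_exp_weight_def)

lemma not_in_neighbours_self:
  assumes "\<forall>e\<in>G. card e = 2" shows "v \<notin> neighbours G v"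
  using assms by (fastforce simp: neighbours_def adj_def)

lemma finite_neighbours:
  assumes "finite G" "\<forall>e\<in>G. card e = 2" shows "finite (neighbours G v)"
proof (rule finite_subset)
  show "finite (\<Union>G)"
    using assms by (intro finite_Union) (auto intro: card_ge_0_finite)
qed (auto simp: neighbours_def adj_def)

lemma incident_edges_eq_image_neighbours:
  assumes "\<forall>e\<in>G. card e = 2"
  shows "{e\<in>G. v \<in> e} = (\<lambda>x. {v, x}) ` neighbours G v"
proof
  show "{e\<in>G. v \<in> e} \<subseteq> (\<lambda>x. {v, x}) ` neighbours G v"
  proof
    fix e assume e: "e \<in> {e\<in>G. v \<in> e}"
    obtain x where "x \<noteq> v" "e = {v, x}"
      by (rule card_2_memberE[of e v]) (use e assms in auto)
    with e show "e \<in> (\<lambda>x. {v, x}) ` neighbours G v"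
      by (auto simp: neighbours_def adj_def)
  qed
qed (auto simp: neighbours_def adj_def)

lemma inj_on_edge_to_neighbour:
  assumes "\<forall>e\<in>G. card e = 2" shows "inj_on (\<lambda>x. {v, x}) (neighbours G v)"
  using not_in_neighbours_self[OF assms] by (auto simp: inj_on_def doubleton_eq_iff)

lemma degree_eq_card_neighbours:
  assumes "\<forall>e\<in>G. card e = 2" shows "degree G v = card (neighbours G v)"
  unfolding degree_def incident_edges_eq_image_neighbours[OF assms]
  using card_image[OF inj_on_edge_to_neighbour[OF assms]] .

lemma degree_move_edge:
  assumes "finite G" "{a, w} \<in> G" "{b, w} \<notin> G"
  shows "degree (G - {{a, w}} \<union> {{b, w}}) y + (if y \<in> {a, w} then 1 else 0)
       = degree G y + (if y \<in> {b, w} then 1 else 0)"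
proof -
  define S where "S = {e\<in>G. y \<in> e}"
  have "finite S" using assms(1) by (simp add: S_def)
  have removed: "card (S - {{a, w}}) + (if y \<in> {a, w} then 1 else 0) = card S"
  proof (cases "y \<in> {a, w}")
    case True
    then have "{a, w} \<in> S" using assms(2) by (auto simp: S_def)
    then show ?thesis using True card_Suc_Diff1[OF \<open>finite S\<close>] by simp
  next
    case False
    then have "{a, w} \<notin> S" by (auto simp: S_def)
    then show ?thesis using False by simp
  qed
  have "{b, w} \<notin> S - {{a, w}}" using assms(3) by (simp add: S_def)
  then have added: "card ((S - {{a, w}}) \<union> (if y \<in> {b, w} then {{b, w}} else {}))
      = card (S - {{a, w}}) + (if y \<in> {b, w} then 1 else 0)"
    using \<open>finite S\<close> by simp
  have "{e\<in>G - {{a, w}} \<union> {{b, w}}. y \<in> e} = (S - {{a, w}}) \<union> (if y \<in> {b, w} then {{b, w}} else {})"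
    by (auto simp: S_def)
  then show ?thesis
    using removed added by (simp add: degree_def S_def)
qed

definition pendant_star :: "'a set set \<Rightarrow> 'a \<Rightarrow> 'a \<Rightarrow> bool" where
  "pendant_star G u v \<longleftrightarrow> {u, v} \<in> G \<and> (\<forall>x\<in>neighbours G v - {u}. pendant G x)"

definition pendant_star_weight :: "nat \<Rightarrow> nat \<Rightarrow> real" where
  "pendant_star_weight D k = exp (real (k * D)) + real (k - 1) * exp (real k)"

lemma sum_incident_edges_pendant_star:
  assumes "finite G" and two: "\<forall>e\<in>G. card e = 2" and "pendant_star G u v"
  shows "(\<Sum>e\<in>{e\<in>G. v \<in> e}. edge_exp_weight G e) = pendant_star_weight (degree G u) (degree G v)"
proof -
  have v: "v \<notin> neighbours G v" using not_in_neighbours_self[OF two] .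
  have u: "u \<in> neighbours G v" and pendants: "\<forall>x\<in>neighbours G v - {u}. degree G x = 1"
    using assms(3) by (auto simp: pendant_star_def pendant_def neighbours_def adj_def insert_commute)
  have fin: "finite (neighbours G v)" using finite_neighbours[OF assms(1) two] .
  have "(\<Sum>e\<in>{e\<in>G. v \<in> e}. edge_exp_weight G e)
      = (\<Sum>x\<in>neighbours G v. exp (real (degree G v * degree G x)))"
    unfolding incident_edges_eq_image_neighbours[OF two]
      sum.reindex[OF inj_on_edge_to_neighbour[OF two]]
  proof (intro sum.cong refl)
    fix x assume "x \<in> neighbours G v"
    with v have "x \<noteq> v" by blast
    then show "(edge_exp_weight G \<circ> (\<lambda>x. {v, x})) x = exp (real (degree G v * degree G x))"
      by (simp add: edge_exp_weight_def)
  qed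
  also have "\<dots> = exp (real (degree G v * degree G u)) + (\<Sum>x\<in>neighbours G v - {u}. exp (real (degree G v)))"
    using pendants by (simp add: sum.remove[OF fin u])
  also have "\<dots> = pendant_star_weight (degree G u) (degree G v)"
    using u fin by (simp add: pendant_star_weight_def degree_eq_card_neighbours[OF two])
  finally show ?thesis .
qed

lemma exp_M2_split_pendant_stars:
  assumes "finite G" and two: "\<forall>e\<in>G. card e = 2"
    and a: "pendant_star G u a" and b: "pendant_star G u b" and "a \<noteq> b" "{a, b} \<notin> G"
  shows "exp_M2 G = (\<Sum>e\<in>{e\<in>G. a \<notin> e \<and> b \<notin> e}. edge_exp_weight G e)
    + pendant_star_weight (degree G u) (degree G a) + pendant_star_weight (degree G u) (degree G b)"
proof -
  let ?A = "{e\<in>G. a \<in> e}" and ?B = "{e\<in>G. b \<in> e}"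
  have disjoint: "?A \<inter> ?B = {}"
  proof (rule equals0I)
    fix e assume "e \<in> ?A \<inter> ?B"
    then have "e = {a, b}" and "e \<in> G"
      using two assms(5) card_2_eq_doubleton[of e a b] by auto
    with assms(6) show False by simp
  qed
  have "G - (?A \<union> ?B) = {e\<in>G. a \<notin> e \<and> b \<notin> e}" by auto
  then have "exp_M2 G = (\<Sum>e\<in>{e\<in>G. a \<notin> e \<and> b \<notin> e}. edge_exp_weight G e)
      + (\<Sum>e\<in>?A \<union> ?B. edge_exp_weight G e)"
    unfolding exp_M2_eq_sum_edge_exp_weight
    using sum.subset_diff[OF _ assms(1), of "?A \<union> ?B"] by auto
  also have "(\<Sum>e\<in>?A \<union> ?B. edge_exp_weight G e)
      = (\<Sum>e\<in>?A. edge_exp_weight G e) + (\<Sum>e\<in>?B. edge_exp_weight G e)"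
    using assms(1) disjoint by (simp add: sum.union_disjoint)
  finally show ?thesis
    using sum_incident_edges_pendant_star[OF assms(1) two] a b by simp
qed

lemma two_le_exp: "1 \<le> x \<Longrightarrow> 2 \<le> exp (x::real)"
  using exp_ge_add_one_self[of x] by linarith

lemma pendant_star_weight_transfer_less:
  assumes "1 \<le> D" "1 \<le> j" "j < k"
  shows "pendant_star_weight D k + pendant_star_weight D (j + 1)
       < pendant_star_weight D (k + 1) + pendant_star_weight D j"
proof -
  have "exp (real ((j + 1) * D)) \<le> exp (real (k * D))"
    unfolding exp_le_cancel_iff of_nat_le_iff using assms by (intro mult_right_mono) auto
  then have "exp (real (k * D)) + exp (real ((j + 1) * D)) \<le> 2 * exp (real (k * D))"
    by linarith
  also have "\<dots> \<le> exp (real D) * exp (real (k * D))"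
    using assms by (intro mult_right_mono two_le_exp) auto
  also have "\<dots> = exp (real ((k + 1) * D))"
    by (simp add: algebra_simps flip: exp_add)
  finally have exps: "exp (real (k * D)) + exp (real ((j + 1) * D)) \<le> exp (real ((k + 1) * D))" .
  have "real j * exp (real (j + 1)) \<le> real (k - 1) * exp (real k)"
    using assms by (intro mult_mono) auto
  moreover have "real (k - 1) * exp (real k) \<le> real k * exp (real k)"
    by (intro mult_right_mono) auto
  ultimately have "real (k - 1) * exp (real k) + real j * exp (real (j + 1)) \<le> 2 * (real k * exp (real k))"
    by linarith
  also have "\<dots> \<le> exp 1 * (real k * exp (real k))"
    by (intro mult_right_mono two_le_exp) auto
  also have "\<dots> = real k * exp (real (k + 1))"
    by (simp add: exp_add algebra_simps)
  finally have linear: "real (k - 1) * exp (real k) + real j * exp (real (j + 1)) \<le> real k * exp (real (k + 1))" .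
  have "0 < exp (real (j * D)) + real (j - 1) * exp (real j)"
    by (simp add: add_pos_nonneg)
  then show ?thesis
    using exps linear by (simp add: pendant_star_weight_def)
qed

locale pendant_leaf_move =
  fixes G :: "'a set set" and u a b w :: 'a
  assumes finite: "finite G" and two_elem: "\<forall>e\<in>G. card e = 2"
    and star_a: "pendant_star G u a" and star_b: "pendant_star G u b" and a_ne_b: "a \<noteq> b"
    and leaf: "w \<in> neighbours G b - {u}" and two_le_degree_b: "2 \<le> degree G b"
begin

definition moved :: "'a set set" where
  "moved = G - {{b, w}} \<union> {{a, w}}"

lemma edge_ua: "{u, a} \<in> G" and edge_ub: "{u, b} \<in> G" and edge_bw: "{b, w} \<in> G"
  using star_a star_b leaf by (auto simp: pendant_star_def neighbours_def adj_def)

lemma distinct_vertices: "u \<noteq> a" "u \<noteq> b" "w \<noteq> b" "w \<noteq> u"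
  using two_elem_edge_neq[OF two_elem] edge_ua edge_ub edge_bw leaf by auto

lemma degree_leaf: "degree G w = 1"
  using star_b leaf by (simp add: pendant_star_def pendant_def)

lemma no_edge_ab: "{a, b} \<notin> G"
proof
  assume "{a, b} \<in> G"
  then have "b \<in> neighbours G a - {u}"
    using distinct_vertices by (simp add: neighbours_def adj_def)
  then have "degree G b = 1"
    using star_a by (simp add: pendant_star_def pendant_def)
  with two_le_degree_b show False by simp
qed

lemma no_edge_aw: "{a, w} \<notin> G"
proof
  assume "{a, w} \<in> G"
  then have "{a, b} \<subseteq> neighbours G w"
    using edge_bw by (auto simp: neighbours_def adj_def insert_commute)
  then have "card {a, b} \<le> degree G w"
    by (simp add: card_mono degree_eq_card_neighbours[OF two_elem] finite_neighbours[OF finite two_elem])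
  with degree_leaf a_ne_b show False by simp
qed

lemma leaf_ne_a: "w \<noteq> a"
  using no_edge_ab edge_bw by (auto simp: insert_commute)

lemma degree_moved:
  "degree moved y + (if y \<in> {b, w} then 1 else 0) = degree G y + (if y \<in> {a, w} then 1 else 0)"
  unfolding moved_def by (rule degree_move_edge[OF finite edge_bw no_edge_aw])

lemma degree_moved_a: "degree moved a = degree G a + 1"
  using degree_moved[of a] a_ne_b leaf_ne_a by simp

lemma degree_moved_b: "degree moved b + 1 = degree G b"
  using degree_moved[of b] a_ne_b distinct_vertices by simp

lemma degree_moved_other: "y \<noteq> a \<Longrightarrow> y \<noteq> b \<Longrightarrow> degree moved y = degree G y"
  using degree_moved[of y] by auto

lemma finite_moved: "finite moved"
  using finite by (simp add: moved_def)

lemma two_elem_moved: "\<forall>e\<in>moved. card e = 2"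
  using two_elem leaf_ne_a by (auto simp: moved_def)

lemma pendant_star_moved_a: "pendant_star moved u a"
  unfolding pendant_star_def
proof
  show "{u, a} \<in> moved"
    using edge_ua distinct_vertices a_ne_b by (auto simp: moved_def doubleton_eq_iff)
  show "\<forall>x\<in>neighbours moved a - {u}. pendant moved x"
  proof
    fix x assume x: "x \<in> neighbours moved a - {u}"
    show "pendant moved x"
    proof (cases "x = w")
      case True
      then show ?thesis
        using degree_moved_other[of w] degree_leaf leaf_ne_a distinct_vertices
        by (simp add: pendant_def)
    next
      case False
      then have "x \<in> neighbours G a - {u}"
        using x by (auto simp: moved_def neighbours_def adj_def doubleton_eq_iff)
      moreover have "x \<noteq> a" "x \<noteq> b"
        using calculation not_in_neighbours_self[OF two_elem] no_edge_ab
        by (auto simp: neighbours_def adj_def)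
      ultimately show ?thesis
        using star_a degree_moved_other[of x] by (simp add: pendant_star_def pendant_def)
    qed
  qed
qed

lemma pendant_star_moved_b: "pendant_star moved u b"
  unfolding pendant_star_def
proof
  show "{u, b} \<in> moved"
    using edge_ub distinct_vertices by (auto simp: moved_def doubleton_eq_iff)
  show "\<forall>x\<in>neighbours moved b - {u}. pendant moved x"
  proof
    fix x assume "x \<in> neighbours moved b - {u}"
    then have x: "x \<in> neighbours G b - {u}"
      using a_ne_b distinct_vertices by (auto simp: moved_def neighbours_def adj_def doubleton_eq_iff)
    moreover have "x \<noteq> a" "x \<noteq> b"
      using x not_in_neighbours_self[OF two_elem] no_edge_ab
      by (auto simp: neighbours_def adj_def insert_commute)
    ultimately show "pendant moved x"
      using star_b degree_moved_other[of x] by (simp add: pendant_star_def pendant_def)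
  qed
qed

lemma no_edge_ab_moved: "{a, b} \<notin> moved"
  using no_edge_ab a_ne_b distinct_vertices by (auto simp: moved_def doubleton_eq_iff)

lemma exp_M2_less_moved:
  assumes "degree G b \<le> degree G a"
  shows "exp_M2 G < exp_M2 moved"
proof -
  let ?rest = "\<lambda>H. \<Sum>e\<in>{e\<in>H. a \<notin> e \<and> b \<notin> e}. edge_exp_weight H e"
  define D where "D = degree G u"
  have degree_u: "degree moved u = D"
    using degree_moved_other[of u] distinct_vertices by (simp add: D_def)
  have "{u, a} \<in> {e\<in>G. u \<in> e}" using edge_ua by simp
  then have "1 \<le> D"
    using finite by (auto simp: D_def degree_def Suc_le_eq card_gt_0_iff)
  have "{e\<in>moved. a \<notin> e \<and> b \<notin> e} = {e\<in>G. a \<notin> e \<and> b \<notin> e}"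
    by (auto simp: moved_def)
  moreover have "edge_exp_weight moved e = edge_exp_weight G e" if "a \<notin> e" "b \<notin> e" for e
    unfolding edge_exp_weight_def
    by (intro arg_cong[where f = "\<lambda>n. exp (real n)"] prod.cong refl)
      (metis that degree_moved_other)
  ultimately have rest: "?rest moved = ?rest G"
    by (auto intro: sum.cong)
  have "exp_M2 G = ?rest G + pendant_star_weight D (degree G a) + pendant_star_weight D (degree G b)"
    unfolding D_def by (rule exp_M2_split_pendant_stars[OF finite two_elem star_a star_b a_ne_b no_edge_ab])
  also have "\<dots> < ?rest G + pendant_star_weight D (degree G a + 1) + pendant_star_weight D (degree G b - 1)"
    using pendant_star_weight_transfer_less[OF \<open>1 \<le> D\<close>, of "degree G b - 1" "degree G a"]
      two_le_degree_b assms by simp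
  also have "\<dots> = exp_M2 moved"
    using exp_M2_split_pendant_stars[OF finite_moved two_elem_moved pendant_star_moved_a
        pendant_star_moved_b a_ne_b no_edge_ab_moved]
    by (simp add: rest degree_u degree_moved_a flip: degree_moved_b)
  finally show ?thesis .
qed

end

theorem lemma2:
  fixes V :: "'a set" and E :: "'a set set" and n d1 d2 :: nat and u u1 u2 w :: 'a
  assumes tree: "is_tree V E"
    and n: "card V = n"
    and uV: "u \<in> V"
    and umax: "\<forall>v\<in>V. degree E v \<le> degree E u"
    and u1: "adj E u u1" and u2: "adj E u u2" and u12: "u1 \<noteq> u2"
    and d1: "card (neighbours E u1 - {u}) = d1"
    and p1: "\<forall>x\<in>neighbours E u1 - {u}. pendant E x"
    and d2: "card (neighbours E u2 - {u}) = d2"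
    and p2: "\<forall>x\<in>neighbours E u2 - {u}. pendant E x"
    and w: "w \<in> neighbours E u2 - {u}"
    and d12: "d1 \<ge> d2" and d2pos: "d2 \<ge> 1"
  shows "exp_M2 E < exp_M2 ((E - {{u2, w}}) \<union> {{u1, w}})"
proof -
  have finE: "finite E" and two: "\<forall>e\<in>E. card e = 2"
    using tree finite_subset[of E "Pow V"] by (auto simp: is_tree_def simple_graph_def)
  have degree_neighbour_of_u: "degree E v = card (neighbours E v - {u}) + 1" if "adj E u v" for v
    using that finite_neighbours[OF finE two, of v]
    by (simp add: degree_eq_card_neighbours[OF two] neighbours_def adj_def insert_commute
        card_Suc_Diff1 del: card_Diff_insert)
  interpret pendant_leaf_move E u u1 u2 w
    using finE two u1 u2 p1 p2 u12 w d2pos degree_neighbour_of_u[OF u2]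
    by unfold_locales (auto simp: pendant_star_def adj_def d2)
  show ?thesis
    using exp_M2_less_moved degree_neighbour_of_u[OF u1] degree_neighbour_of_u[OF u2] d1 d2 d12
    by (simp add: moved_def)
qed

end
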